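(* Let $k_1,k_2,n$ be positive integers with $k_1\le k_2$ and $k_1+k_2\ge 4$. If there exists a purely singular perfect $B[-k_1,k_2](2^n)$ set, then $2^n=k_1+k_2+1$.
   Context: For a positive integer $q$, $\mathbb{Z}_q$ is the ring of integers modulo $q$. For integers $a\le b$, $[a,b]^\ast=\{a,a+1,\dots,b\}\setminus\{0\}$. For non-negative integers $0\le k_1\le k_2$ and a positive integer $q$, a set $B\subseteq\mathbb{Z}_q$ is a $B[-k_1,k_2](q)$ set (splitter set) if, for each $b\in B$, the set $\{ab \bmod q: a\in[-k_1,k_2]^\ast\}$ consists of $k_1+k_2$ distinct nonzero elements, and these sets are pairwise disjoint for distinct $b\in B$. Such a set is perfect if $|B|=(q-1)/(k_1+k_2)$; equivalently, every nonzero element of $\mathbb{Z}_q$ has a unique representation $ab$ with $a\in[-k_1,k_2]^\ast$, $b\in B$ (and $0$ has no such representation). A perfect $B[-k_1,k_2](q)$ set is called purely singular if for every prime $p\mid q$ there is an integer $k$ with $0<k\le k_2$ and $p\mid k$. *)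

theory Defs
  imports Main "HOL-Computational_Algebra.Primes"
begin

text \<open>Z_q is represented by the residues {0..<q} of int; multiplication is taken mod q.\<close>

definition mult_range :: "int \<Rightarrow> int \<Rightarrow> int set" where
  "mult_range k1 k2 = {a. - k1 \<le> a \<and> a \<le> k2 \<and> a \<noteq> 0}"

definition splitter_image :: "int \<Rightarrow> int \<Rightarrow> int \<Rightarrow> int \<Rightarrow> int set" where
  "splitter_image k1 k2 q b = (\<lambda>a. (a * b) mod q) ` mult_range k1 k2"

definition splitter_set :: "int \<Rightarrow> int \<Rightarrow> int \<Rightarrow> int set \<Rightarrow> bool" where
  "splitter_set k1 k2 q B \<longleftrightarrow>
     B \<subseteq> {0..<q} \<and>
     (\<forall>b\<in>B. inj_on (\<lambda>a. (a * b) mod q) (mult_range k1 k2) \<and>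
              0 \<notin> splitter_image k1 k2 q b) \<and>
     (\<forall>b\<in>B. \<forall>b'\<in>B. b \<noteq> b' \<longrightarrow> splitter_image k1 k2 q b \<inter> splitter_image k1 k2 q b' = {})"

definition perfect_splitter_set :: "int \<Rightarrow> int \<Rightarrow> int \<Rightarrow> int set \<Rightarrow> bool" where
  "perfect_splitter_set k1 k2 q B \<longleftrightarrow>
     splitter_set k1 k2 q B \<and> int (card B) * (k1 + k2) = q - 1"

definition purely_singular :: "int \<Rightarrow> int \<Rightarrow> int \<Rightarrow> int set \<Rightarrow> bool" where
  "purely_singular k1 k2 q B \<longleftrightarrow>
     perfect_splitter_set k1 k2 q B \<and>
     (\<forall>p::int. prime p \<and> p dvd q \<longrightarrow> (\<exists>k. 0 < k \<and> k \<le> k2 \<and> p dvd k))"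

end

theory Submission
  imports Defs
begin

text \<open>
  Write \<open>K = k1 + k2\<close> and let \<open>B'\<close> be the set of odd elements of \<open>B\<close>. Every odd residue
  modulo \<open>2 ^ n\<close> is uniquely a product of an odd multiplier and an element of \<open>B'\<close>, so
  \<open>(K + 1) / 2 * |B'| = 2 ^ (n - 1)\<close>; hence \<open>K + 1 = 2 ^ m\<close> and \<open>|B'| = 2 ^ d\<close> with
  \<open>n = m + d\<close>. For \<open>d = 1\<close> the count \<open>|B| * K = 2 ^ n - 1 = 2 * K + 1\<close> forces \<open>K = 1\<close>.
  For \<open>d \<ge> 2\<close>, a congruence between elements of \<open>B'\<close> (or of \<open>\<plusminus>B'\<close> when \<open>k1\<close> is large)
  modulo a smaller power of two becomes, after multiplication by a suitable power of two, a
  coincidence of two products in \<open>Z\<^bsub>2^n\<^esub>\<close>. So \<open>B'\<close> (or \<open>\<plusminus>B'\<close>) is a set of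
  \<open>2 ^ (l - 1)\<close> odd integers, distinct modulo \<open>2 ^ l\<close>, none congruent modulo \<open>2 ^ (l + 1)\<close> to
  three times another. No such set exists: it picks exactly one of \<open>x, x + 2 ^ l\<close> for every
  odd \<open>x\<close>, so it is closed under \<open>x \<mapsto> 3 x + 2 ^ l\<close> modulo \<open>2 ^ (l + 1)\<close>; iterating this
  \<open>2 ^ (l - 2)\<close> times maps \<open>x\<close> to \<open>x + 2 ^ l\<close>, because \<open>3 ^ 2 ^ (l - 2) \<equiv> 1 + 2 ^ l\<close>.
\<close>

lemma card_odd_interval:
  fixes c :: int
  shows "card {x. c \<le> x \<and> x < c + 2 * int j \<and> odd x} = j"
proof (induction j)
  case 0
  have "{x. c \<le> x \<and> x < c + 2 * int 0 \<and> odd x} = {}" by auto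
  then show ?case by (simp only: card.empty)
next
  case (Suc j)
  let ?S = "{x. c \<le> x \<and> x < c + 2 * int j \<and> odd x}"
  define y where "y = (if odd c then c + 2 * int j else c + 2 * int j + 1)"
  have "{x. c \<le> x \<and> x < c + 2 * int (Suc j) \<and> odd x} = insert y ?S"
    unfolding y_def by (cases "odd c") (auto, presburger+)
  moreover have "finite ?S"
    by (rule finite_subset[of _ "{c..<c + 2 * int j}"]) auto
  moreover have "y \<notin> ?S"
    unfolding y_def by auto
  ultimately show ?case
    using Suc by simp
qed

lemma three_power_two_power:
  "\<exists>u::int. 3 ^ 2 ^ Suc k = 1 + 2 ^ (k + 3) * (2 * u + 1)"
proof (induction k)
  case 0
  show ?case by (rule exI[of _ 0]) simp
next
  case (Suc k)
  then obtain u :: int where u: "3 ^ 2 ^ Suc k = 1 + 2 ^ (k + 3) * (2 * u + 1)"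
    by blast
  have "(3::int) ^ 2 ^ Suc (Suc k) = (3 ^ 2 ^ Suc k)\<^sup>2"
    by (simp add: power_mult[symmetric] mult.commute)
  also have "\<dots> = 1 + 2 ^ (Suc k + 3) * (2 * (u + 2 ^ (k + 1) * (2 * u + 1)\<^sup>2) + 1)"
    unfolding u by (simp add: power2_eq_square algebra_simps power_add)
  finally show ?case by blast
qed

lemma mod_mult_sign_cancel:
  fixes e x y N :: int
  assumes "e \<in> {1, -1}" and "(e * x) mod N = y mod N"
  shows "x mod N = (e * y) mod N"
proof -
  have "(e * (e * x)) mod N = (e * y) mod N"
    using mod_mult_cong[OF refl assms(2)] .
  moreover have "e * (e * x) = x"
    using assms(1) by auto
  ultimately show ?thesis
    by simp
qed

lemma mod_double_cases:
  fixes x y M :: int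
  assumes "x mod M = y mod M"
  obtains "y mod (2 * M) = x mod (2 * M)" | "y mod (2 * M) = (x + M) mod (2 * M)"
proof -
  obtain j where j: "y = x + M * j"
    using assms by (metis mod_eq_dvd_iff dvdE add_diff_cancel_left' diff_add_cancel)
  consider i where "j = 2 * i" | i where "j = 2 * i + 1"
    by (metis evenE oddE)
  then show thesis
  proof cases
    case (1 i)
    then have "y = x + (2 * M) * i" using j by simp
    then show thesis using that(1) by simp
  next
    case (2 i)
    then have "y = (x + M) + (2 * M) * i" using j by (simp add: algebra_simps)
    then show thesis using that(2) by simp
  qed
qed

lemma odd_half_system_three_multiple:
  fixes T :: "int set" and l :: nat
  defines "M \<equiv> 2 ^ l"
  assumes "3 \<le> l"
    and half: "\<And>x. odd x \<Longrightarrow> x mod (2 * M) \<in> T \<longleftrightarrow> (x + M) mod (2 * M) \<notin> T"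
  shows "\<exists>x\<in>T. (3 * x) mod (2 * M) \<in> T"
proof (rule ccontr)
  assume "\<not> ?thesis"
  then have step: "(3 * x + M) mod (2 * M) \<in> T" if "odd x" "x mod (2 * M) \<in> T" for x
    using half[of "3 * x"] that by (auto simp: mod_mult_right_eq)
  have M_even: "even M"
    unfolding M_def using \<open>3 \<le> l\<close> by simp
  obtain x0 where x0: "odd x0" "x0 mod (2 * M) \<in> T"
    using half[of 1] M_even by (metis odd_one even_add)
  have orbit: "(3 ^ k * x0 + int k * M) mod (2 * M) \<in> T" for k
  proof (induction k)
    case 0
    show ?case using x0 by simp
  next
    case (Suc k)
    have "odd (3 ^ k * x0 + int k * M)"
      using x0(1) M_even by simp
    then have "(3 * (3 ^ k * x0 + int k * M) + M) mod (2 * M) \<in> T"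
      using Suc step by blast
    moreover have "3 * (3 ^ k * x0 + int k * M) + M = (3 ^ Suc k * x0 + int (Suc k) * M) + (2 * M) * int k"
      by (simp add: algebra_simps)
    ultimately show ?case
      by (metis mod_mult_self2)
  qed
  obtain j where l: "l = j + 3"
    using \<open>3 \<le> l\<close> by (metis le_add_diff_inverse2)
  obtain u :: int where u: "3 ^ 2 ^ Suc j = 1 + M * (2 * u + 1)"
    using three_power_two_power[of j] unfolding M_def l by blast
  have "odd (x0 * (2 * u + 1))"
    using x0(1) by simp
  then obtain w where w: "x0 * (2 * u + 1) = 2 * w + 1"
    by (rule oddE)
  have "3 ^ 2 ^ Suc j * x0 + int (2 ^ Suc j) * M = x0 + M * (x0 * (2 * u + 1)) + (2 * M) * 2 ^ j"
    unfolding u by (simp add: algebra_simps)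
  also have "\<dots> = (x0 + M) + (2 * M) * (w + 2 ^ j)"
    unfolding w by (simp add: algebra_simps)
  finally have "(x0 + M) mod (2 * M) \<in> T"
    using orbit[of "2 ^ Suc j"] by (metis mod_mult_self2)
  then show False
    using half[OF x0(1)] x0(2) by blast
qed

definition odd_residues :: "nat \<Rightarrow> int set" where
  "odd_residues l = {x. 0 \<le> x \<and> x < 2 ^ l \<and> odd x}"

lemma odd_mod_two_power_iff: "0 < l \<Longrightarrow> odd ((x::int) mod 2 ^ l) \<longleftrightarrow> odd x"
  using dvd_mod_iff[of 2 "2 ^ l" x] by simp

lemma mod_in_odd_residues: "0 < l \<Longrightarrow> odd x \<Longrightarrow> x mod 2 ^ l \<in> odd_residues l"
  unfolding odd_residues_def by (simp add: odd_mod_two_power_iff)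

lemma card_odd_residues:
  assumes "0 < l"
  shows "card (odd_residues l) = 2 ^ (l - 1)"
proof -
  have "(2::int) ^ l = 0 + 2 * int (2 ^ (l - 1))"
    using assms by (simp add: power_Suc[symmetric])
  then show ?thesis
    unfolding odd_residues_def by (simp only: card_odd_interval)
qed

lemma odd_system_onto_odd_residues:
  fixes g :: "'a \<Rightarrow> int"
  assumes "0 < l" and card_S: "card S = 2 ^ (l - 1)"
    and odd: "\<And>s. s \<in> S \<Longrightarrow> odd (g s)" and inj: "inj_on (\<lambda>s. g s mod 2 ^ l) S"
  shows "(\<lambda>s. g s mod 2 ^ l) ` S = odd_residues l"
proof (rule card_subset_eq)
  show "finite (odd_residues l)"
    by (rule finite_subset[of _ "{0..<2 ^ l}"]) (auto simp: odd_residues_def)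
  show "(\<lambda>s. g s mod 2 ^ l) ` S \<subseteq> odd_residues l"
    using mod_in_odd_residues[OF \<open>0 < l\<close>] odd by blast
  show "card ((\<lambda>s. g s mod 2 ^ l) ` S) = card (odd_residues l)"
    using card_image[OF inj] card_S card_odd_residues[OF \<open>0 < l\<close>] by simp
qed

lemma odd_system_lifts_to_half_system:
  fixes g :: "'a \<Rightarrow> int" and S :: "'a set" and l :: nat
  defines "T \<equiv> (\<lambda>s. g s mod (2 * 2 ^ l)) ` S"
  assumes "0 < l" and "card S = 2 ^ (l - 1)"
    and "\<And>s. s \<in> S \<Longrightarrow> odd (g s)" and inj: "inj_on (\<lambda>s. g s mod 2 ^ l) S"
    and "odd x"
  shows "x mod (2 * 2 ^ l) \<in> T \<longleftrightarrow> (x + 2 ^ l) mod (2 * 2 ^ l) \<notin> T"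
proof (intro iffI notI)
  assume "x mod (2 * 2 ^ l) \<in> T" "(x + 2 ^ l) mod (2 * 2 ^ l) \<in> T"
  then obtain s s' where s: "s \<in> S" "s' \<in> S"
    and gs: "g s mod (2 * 2 ^ l) = x mod (2 * 2 ^ l)"
    and gs': "g s' mod (2 * 2 ^ l) = (x + 2 ^ l) mod (2 * 2 ^ l)"
    unfolding T_def by auto
  moreover have "y mod (2 * 2 ^ l) mod 2 ^ l = y mod 2 ^ l" for y :: int
    by (simp add: mod_mod_cancel)
  ultimately have "g s mod 2 ^ l = x mod 2 ^ l" "g s' mod 2 ^ l = x mod 2 ^ l"
    by (metis mod_add_self2)+
  then have "s = s'"
    using inj_onD[OF inj _ s] by simp
  then have "x mod (2 * 2 ^ l) = (x + 2 ^ l) mod (2 * 2 ^ l)"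
    using gs gs' by simp
  then show False
    by (simp add: mod_eq_dvd_iff)
next
  assume "(x + 2 ^ l) mod (2 * 2 ^ l) \<notin> T"
  have "x mod 2 ^ l \<in> (\<lambda>s. g s mod 2 ^ l) ` S"
    using odd_system_onto_odd_residues[OF assms(2-5)] mod_in_odd_residues[OF assms(2,6)] by simp
  then obtain s where "s \<in> S" and "x mod 2 ^ l = g s mod 2 ^ l"
    by blast
  from this(2) show "x mod (2 * 2 ^ l) \<in> T"
  proof (cases rule: mod_double_cases)
    case 1
    then show ?thesis
      using \<open>s \<in> S\<close> unfolding T_def by (metis image_eqI)
  next
    case 2
    then show ?thesis
      using \<open>s \<in> S\<close> \<open>(x + 2 ^ l) mod (2 * 2 ^ l) \<notin> T\<close> unfolding T_def by (metis image_eqI)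
  qed
qed

lemma odd_system_three_multiple:
  fixes g :: "'a \<Rightarrow> int"
  assumes "3 \<le> l" and "card S = 2 ^ (l - 1)"
    and "\<And>s. s \<in> S \<Longrightarrow> odd (g s)" and "inj_on (\<lambda>s. g s mod 2 ^ l) S"
  shows "\<exists>s\<in>S. \<exists>s'\<in>S. (3 * g s) mod 2 ^ Suc l = g s' mod 2 ^ Suc l"
proof -
  let ?T = "(\<lambda>s. g s mod (2 * 2 ^ l)) ` S"
  have "0 < l"
    using \<open>3 \<le> l\<close> by simp
  obtain t where "t \<in> ?T" "(3 * t) mod (2 * 2 ^ l) \<in> ?T"
    using odd_half_system_three_multiple[OF \<open>3 \<le> l\<close>, of ?T]
      odd_system_lifts_to_half_system[OF \<open>0 < l\<close> assms(2-4)] by blast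
  then obtain s s' where "s \<in> S" "s' \<in> S" "t = g s mod (2 * 2 ^ l)"
    "(3 * t) mod (2 * 2 ^ l) = g s' mod (2 * 2 ^ l)"
    by blast
  then show ?thesis
    by (auto simp: mod_mult_right_eq)
qed

lemma splitter_set_products_unique:
  assumes "splitter_set k1 k2 q B"
    and "a \<in> mult_range k1 k2" "a' \<in> mult_range k1 k2" "b \<in> B" "b' \<in> B"
    and "(a * b) mod q = (a' * b') mod q"
  shows "a = a' \<and> b = b'"
proof -
  have "(a * b) mod q \<in> splitter_image k1 k2 q b" "(a' * b') mod q \<in> splitter_image k1 k2 q b'"
    using assms(2,3) unfolding splitter_image_def by blast+
  then have "b = b'"
    using assms(1,4,5,6) unfolding splitter_set_def by (metis disjoint_iff)
  moreover have "inj_on (\<lambda>a. (a * b) mod q) (mult_range k1 k2)"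
    using assms(1,4) unfolding splitter_set_def by blast
  ultimately show ?thesis
    using assms(2,3,6) by (auto dest: inj_onD)
qed

lemma mult_rangeI: "-k1 \<le> c \<Longrightarrow> c \<le> k2 \<Longrightarrow> c \<noteq> 0 \<Longrightarrow> c \<in> mult_range k1 k2"
  unfolding mult_range_def by simp

lemma card_mult_range:
  assumes "0 \<le> k1" "0 \<le> k2"
  shows "card (mult_range k1 k2) = nat (k1 + k2)"
proof -
  have "mult_range k1 k2 = {-k1..k2} - {0}"
    unfolding mult_range_def by auto
  then show ?thesis
    using assms by simp
qed

lemma perfect_splitter_set_products_cover:
  assumes perfect: "perfect_splitter_set k1 k2 q B" and "0 \<le> k1" "0 \<le> k2"
    and "0 < x" "x < q"
  shows "\<exists>a\<in>mult_range k1 k2. \<exists>b\<in>B. (a * b) mod q = x"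
proof -
  let ?R = "mult_range k1 k2"
  let ?U = "\<Union>b\<in>B. splitter_image k1 k2 q b"
  have split: "splitter_set k1 k2 q B" and card_B: "int (card B) * (k1 + k2) = q - 1"
    using perfect unfolding perfect_splitter_set_def by auto
  have "finite B"
    using split unfolding splitter_set_def by (meson finite_atLeastLessThan_int finite_subset)
  have "finite ?R"
    by (rule finite_subset[of _ "{-k1..k2}"]) (auto simp: mult_range_def)
  have card_images: "card (splitter_image k1 k2 q b) = card ?R" if "b \<in> B" for b
    using split that unfolding splitter_set_def splitter_image_def by (simp add: card_image)
  have "card ?U = (\<Sum>b\<in>B. card (splitter_image k1 k2 q b))"
    using split \<open>finite B\<close> \<open>finite ?R\<close>
    by (intro card_UN_disjoint) (auto simp: splitter_set_def splitter_image_def)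
  also have "\<dots> = card B * nat (k1 + k2)"
    using card_images card_mult_range[OF assms(2,3)] by simp
  finally have "int (card ?U) = q - 1"
    using card_B assms(2,3) by simp
  moreover have "?U \<subseteq> {1..<q}"
  proof
    fix y
    assume "y \<in> ?U"
    then obtain b where "b \<in> B" "y \<in> splitter_image k1 k2 q b"
      by blast
    moreover have "0 < q"
      using \<open>0 < x\<close> \<open>x < q\<close> by simp
    ultimately have "y \<noteq> 0"
      using split unfolding splitter_set_def by auto
    moreover have "0 \<le> y \<and> y < q"
      using \<open>y \<in> splitter_image k1 k2 q b\<close> \<open>0 < q\<close> unfolding splitter_image_def by auto
    ultimately show "y \<in> {1..<q}"
      by simp
  qed
  ultimately have "?U = {1..<q}"
    by (intro card_subset_eq) auto
  then have "x \<in> ?U"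
    using \<open>0 < x\<close> \<open>x < q\<close> by simp
  then show ?thesis
    unfolding splitter_image_def by force
qed

lemma card_odd_mult_range:
  assumes "0 \<le> k1" "0 \<le> k2" "odd (k1 + k2)"
  shows "2 * int (card {a \<in> mult_range k1 k2. odd a}) = k1 + k2 + 1"
proof -
  obtain i where i: "k1 + k2 = 2 * i + 1"
    using assms(3) by (rule oddE)
  define j where "j = nat (i + 1)"
  have j: "k1 + k2 + 1 = 2 * int j"
    unfolding j_def using i assms(1,2) by simp
  have "{a \<in> mult_range k1 k2. odd a} = {x. -k1 \<le> x \<and> x < -k1 + 2 * int j \<and> odd x}"
    using j unfolding mult_range_def by auto
  then have "card {a \<in> mult_range k1 k2. odd a} = j"
    by (simp only: card_odd_interval)
  then show ?thesis
    using j by simp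
qed

locale dyadic_perfect_splitter =
  fixes k1 k2 :: int and n :: nat and B :: "int set"
  assumes k1_pos: "0 < k1" and k1_le_k2: "k1 \<le> k2" and n_pos: "0 < n"
    and perfect: "perfect_splitter_set k1 k2 (2 ^ n) B"
begin

lemma splitter: "splitter_set k1 k2 (2 ^ n) B"
  using perfect unfolding perfect_splitter_set_def by blast

lemma card_B: "int (card B) * (k1 + k2) = 2 ^ n - 1"
  using perfect unfolding perfect_splitter_set_def by blast

lemma odd_k1_plus_k2: "odd (k1 + k2)"
proof
  assume "even (k1 + k2)"
  then have "even ((2::int) ^ n - 1)"
    using card_B by (metis even_mult_iff)
  then show False
    using n_pos by simp
qed

lemma odd_products_eq_odd_residues:
  "(\<lambda>p. (fst p * snd p) mod 2 ^ n) ` ({a \<in> mult_range k1 k2. odd a} \<times> {b \<in> B. odd b})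
    = odd_residues n" (is "?G ` ?P = _")
proof
  show "?G ` ?P \<subseteq> odd_residues n"
    using mod_in_odd_residues[OF n_pos] by (auto simp: mem_Times_iff)
  show "odd_residues n \<subseteq> ?G ` ?P"
  proof
    fix x
    assume "x \<in> odd_residues n"
    then have "0 < x" "x < 2 ^ n" "odd x"
      unfolding odd_residues_def by (auto simp: order_le_less)
    then have "\<exists>a\<in>mult_range k1 k2. \<exists>b\<in>B. (a * b) mod 2 ^ n = x"
      using k1_pos k1_le_k2 by (intro perfect_splitter_set_products_cover[OF perfect]) simp_all
    then obtain a b where ab: "a \<in> mult_range k1 k2" "b \<in> B" "(a * b) mod 2 ^ n = x"
      by blast
    then have "odd (a * b)"
      using odd_mod_two_power_iff[OF n_pos, of "a * b"] \<open>odd x\<close> by simp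
    with ab show "x \<in> ?G ` ?P"
      by (intro rev_image_eqI[of "(a, b)"]) simp_all
  qed
qed

lemma card_odd_products:
  "card {a \<in> mult_range k1 k2. odd a} * card {b \<in> B. odd b} = 2 ^ (n - 1)"
proof -
  let ?A = "{a \<in> mult_range k1 k2. odd a}" and ?B = "{b \<in> B. odd b}"
  have inj: "inj_on (\<lambda>p. (fst p * snd p) mod 2 ^ n) (?A \<times> ?B)"
  proof (rule inj_onI)
    fix p p'
    assume "p \<in> ?A \<times> ?B" "p' \<in> ?A \<times> ?B" "(fst p * snd p) mod 2 ^ n = (fst p' * snd p') mod 2 ^ n"
    then show "p = p'"
      using splitter_set_products_unique[OF splitter, of "fst p" "fst p'" "snd p" "snd p'"]
      by (simp add: mem_Times_iff prod_eq_iff)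
  qed
  have "card (?A \<times> ?B) = card (odd_residues n)"
    using card_image[OF inj] unfolding odd_products_eq_odd_residues by simp
  then show ?thesis
    using card_odd_residues[OF n_pos] by (simp add: card_cartesian_product)
qed

lemma dyadic_shape:
  obtains m d where "k1 + k2 + 1 = 2 ^ m" "card {b \<in> B. odd b} = 2 ^ d" "n = m + d"
proof -
  obtain i j where ij: "card {a \<in> mult_range k1 k2. odd a} = 2 ^ i" "card {b \<in> B. odd b} = 2 ^ j"
    using prime_power_mult_nat[OF two_is_prime_nat card_odd_products] by blast
  then have "(2::nat) ^ (i + j) = 2 ^ (n - 1)"
    using card_odd_products by (simp add: power_add)
  then have "n = Suc i + j"
    using n_pos by simp
  moreover have "k1 + k2 + 1 = 2 ^ Suc i"
    using card_odd_mult_range[of k1 k2] k1_pos k1_le_k2 odd_k1_plus_k2 ij(1) by simp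
  ultimately show ?thesis
    using that ij(2) by blast
qed

lemma two_power_ne_double: "2 ^ n \<noteq> 2 * (k1 + k2 + 1)"
proof
  assume "2 ^ n = 2 * (k1 + k2 + 1)"
  then have "int (card B) * (k1 + k2) = 2 * (k1 + k2) + 1"
    using card_B by simp
  then have "(int (card B) - 2) * (k1 + k2) = 1"
    by (simp add: algebra_simps)
  then have "k1 + k2 dvd 1"
    by (metis dvd_triv_right)
  then show False
    using k1_pos k1_le_k2 by (simp add: zdvd_not_zless)
qed

lemma products_unique_mod_power:
  assumes "i + l = n" and "(a * b) mod 2 ^ l = (a' * b') mod 2 ^ l"
    and "2 ^ i * a \<in> mult_range k1 k2" "2 ^ i * a' \<in> mult_range k1 k2" "b \<in> B" "b' \<in> B"
  shows "a = a' \<and> b = b'"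
proof -
  have "(2 ^ i * (a * b)) mod (2 ^ i * 2 ^ l) = (2 ^ i * (a' * b')) mod (2 ^ i * 2 ^ l)"
    using assms(2) by (metis mult_mod_right)
  moreover have "(2::int) ^ i * 2 ^ l = 2 ^ n"
    unfolding assms(1)[symmetric] by (simp add: power_add)
  ultimately have "((2 ^ i * a) * b) mod 2 ^ n = ((2 ^ i * a') * b') mod 2 ^ n"
    by (simp add: mult.assoc)
  then show ?thesis
    using splitter_set_products_unique[OF splitter assms(3-6)] by simp
qed

lemma odd_part_exponent_le_one_if_k1_lt:
  assumes K: "k1 + k2 + 1 = 8 * 2 ^ t" and card_odd: "card {b \<in> B. odd b} = 2 ^ d"
    and n: "n = t + 3 + d" and k1: "k1 < 2 * 2 ^ t"
  shows "d \<le> 1"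
proof (rule ccontr)
  assume "\<not> d \<le> 1"
  then have "2 \<le> d"
    by simp
  let ?B = "{b \<in> B. odd b}"
  define P :: int where "P = 2 ^ t"
  have pow: "0 < P" "2 ^ (t + 1) = 2 * P" "2 ^ (t + 2) = 4 * P"
    unfolding P_def by simp_all
  have "6 * P \<le> k2"
    using K k1 unfolding P_def by simp
  then have range: "4 * P \<in> mult_range k1 k2" "2 * P \<in> mult_range k1 k2" "6 * P \<in> mult_range k1 k2"
    using k1_pos pow(1) by (auto intro!: mult_rangeI)
  have inj: "inj_on (\<lambda>b. b mod 2 ^ (d + 1)) ?B"
  proof (rule inj_onI)
    fix b b'
    assume "b \<in> ?B" "b' \<in> ?B" "b mod 2 ^ (d + 1) = b' mod 2 ^ (d + 1)"
    then show "b = b'"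
      using products_unique_mod_power[of "t + 2" "d + 1" 1 b 1 b'] range pow n by simp
  qed
  have "\<exists>b\<in>?B. \<exists>b'\<in>?B. (3 * b) mod 2 ^ Suc (d + 1) = b' mod 2 ^ Suc (d + 1)"
    using \<open>2 \<le> d\<close> card_odd inj
    by (intro odd_system_three_multiple[of "d + 1" ?B "\<lambda>b. b"]) simp_all
  then obtain b b' where "b \<in> B" "b' \<in> B" "(3 * b) mod 2 ^ (d + 2) = (1 * b') mod 2 ^ (d + 2)"
    by auto
  then show False
    using products_unique_mod_power[of "t + 1" "d + 2" 3 b 1 b'] range pow n
    by (simp add: mult.commute)
qed

lemma odd_part_exponent_le_one_if_k1_ge:
  assumes K: "k1 + k2 + 1 = 8 * 2 ^ t" and card_odd: "card {b \<in> B. odd b} = 2 ^ d"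
    and n: "n = t + 3 + d" and k1: "2 * 2 ^ t \<le> k1"
  shows "d \<le> 1"
proof (rule ccontr)
  assume "\<not> d \<le> 1"
  then have "2 \<le> d"
    by simp
  let ?B = "{b \<in> B. odd b}"
  let ?S = "{1, -1::int} \<times> ?B"
  define P :: int where "P = 2 ^ t"
  have pow: "0 < P" "2 ^ (t + 1) = 2 * P" "2 ^ t = P"
    unfolding P_def by simp_all
  have "4 * P \<le> k2"
    using K k1_le_k2 unfolding P_def by presburger
  then have range: "3 * P \<in> mult_range k1 k2"
    "\<And>e. e \<in> {1, -1} \<Longrightarrow> 2 * P * e \<in> mult_range k1 k2 \<and> P * e \<in> mult_range k1 k2"
    using k1 pow(1) unfolding P_def[symmetric] by (auto intro!: mult_rangeI)
  have inj: "inj_on (\<lambda>p. fst p * snd p mod 2 ^ (d + 2)) ?S"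
  proof (rule inj_onI)
    fix p p'
    assume "p \<in> ?S" "p' \<in> ?S" "fst p * snd p mod 2 ^ (d + 2) = fst p' * snd p' mod 2 ^ (d + 2)"
    then show "p = p'"
      using products_unique_mod_power[of "t + 1" "d + 2" "fst p" "snd p" "fst p'" "snd p'"]
        range(2)[of "fst p"] range(2)[of "fst p'"] pow n by (auto simp: prod_eq_iff)
  qed
  have "card ?S = 2 ^ (d + 2 - 1)"
    using card_odd by (simp add: card_cartesian_product)
  then have "\<exists>p\<in>?S. \<exists>p'\<in>?S. (3 * (fst p * snd p)) mod 2 ^ Suc (d + 2) = (fst p' * snd p') mod 2 ^ Suc (d + 2)"
    using \<open>2 \<le> d\<close> inj
    by (intro odd_system_three_multiple[of "d + 2" ?S "\<lambda>p. fst p * snd p"]) auto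
  then obtain p p' where "p \<in> ?S" "p' \<in> ?S"
    and "(3 * (fst p * snd p)) mod 2 ^ Suc (d + 2) = (fst p' * snd p') mod 2 ^ Suc (d + 2)"
    by blast
  moreover obtain e b e' b' where "p = (e, b)" "p' = (e', b')"
    by (cases p, cases p') simp
  ultimately have e: "e \<in> {1, -1}" "e' \<in> {1, -1}" and b: "b \<in> B" "b' \<in> B"
    and cong: "(3 * (e * b)) mod 2 ^ Suc (d + 2) = (e' * b') mod 2 ^ Suc (d + 2)"
    by simp_all
  have "(e * (3 * b)) mod 2 ^ Suc (d + 2) = (e' * b') mod 2 ^ Suc (d + 2)"
    using cong by (simp only: mult.left_commute)
  then have "(3 * b) mod 2 ^ Suc (d + 2) = ((e * e') * b') mod 2 ^ Suc (d + 2)"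
    unfolding mult.assoc by (rule mod_mult_sign_cancel[OF e(1)])
  moreover have "e * e' \<in> {1, -1}"
    using e by auto
  ultimately have "3 = e * e'"
    using products_unique_mod_power[of t "Suc (d + 2)" 3 b "e * e'" b'] range b pow n
    by (simp add: mult.commute)
  then show False
    using e by auto
qed

lemma odd_part_exponent_le_one:
  assumes K: "k1 + k2 + 1 = 2 ^ m" and card_odd: "card {b \<in> B. odd b} = 2 ^ d"
    and n: "n = m + d" and "3 \<le> m"
  shows "d \<le> 1"
proof -
  obtain t where "m = t + 3"
    using \<open>3 \<le> m\<close> by (metis le_add_diff_inverse2)
  then have K': "k1 + k2 + 1 = 8 * 2 ^ t" and n': "n = t + 3 + d"
    using K n by (simp_all add: power_add)
  show ?thesis
  proof (cases "k1 < 2 * 2 ^ t")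
    case True
    then show ?thesis
      by (rule odd_part_exponent_le_one_if_k1_lt[OF K' card_odd n'])
  next
    case False
    then show ?thesis
      by (intro odd_part_exponent_le_one_if_k1_ge[OF K' card_odd n']) simp
  qed
qed

end

theorem theorem3p7:
  fixes k1 k2 :: int and n :: nat
  assumes "0 < k1" and "k1 \<le> k2" and "0 < n" and "k1 + k2 \<ge> 4"
    and "\<exists>B. purely_singular k1 k2 (2 ^ n) B"
  shows "2 ^ n = k1 + k2 + 1"
proof -
  obtain B where "purely_singular k1 k2 (2 ^ n) B"
    using assms(5) by blast
  then interpret dyadic_perfect_splitter k1 k2 n B
    using assms(1-3) by unfold_locales (simp_all add: purely_singular_def)
  obtain m d where K: "k1 + k2 + 1 = 2 ^ m" and card_odd: "card {b \<in> B. odd b} = 2 ^ d"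
    and n: "n = m + d"
    by (rule dyadic_shape)
  have "3 \<le> m"
  proof (rule ccontr)
    assume "\<not> 3 \<le> m"
    then have "(2::int) ^ m \<le> 2 ^ 2"
      by (intro power_increasing) simp_all
    then show False
      using K assms(4) by simp
  qed
  then have "d \<le> 1"
    using odd_part_exponent_le_one K card_odd n by blast
  moreover have "d \<noteq> 1"
    using two_power_ne_double K n by auto
  ultimately show ?thesis
    using K n by simp
qed

end
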